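(* Let $n\ge4$ and assume hypothesis $(\mathrm A_{n-1})$. Let $T$ be an irreducible finite dimensional representation of $U'_q(\mathrm{so}_n)$. Then the restriction of $T$ to the subalgebra $U'_q(\mathrm{so}_{n-1})$ is completely reducible, and either all of its irreducible components are of the form $T_{\mathbf m_{n-1}}$ (classical type) or all of them are of the form $T_{\epsilon,\mathbf m_{n-1}}$ (nonclassical type).
   Context: Notation. Fix $q\in\mathbb C\setminus\{0\}$, not a root of unity, with a choice of $q^{1/2}$. Put $[a]=\frac{q^a-q^{-a}}{q-q^{-1}}$, $[a]_+=\frac{q^a+q^{-a}}{q-q^{-1}}$. The algebra. For $n\ge 3$, $U'_q(\mathrm{so}_n)$ is the complex unital associative algebra generated by $I_{21},\dots,I_{n,n-1}$ with relations, for $2\le i\le n-1$: $I_{i,i-1}^2I_{i+1,i}-(q+q^{-1})I_{i,i-1}I_{i+1,i}I_{i,i-1}+I_{i+1,i}I_{i,i-1}^2=-I_{i+1,i}$; $I_{i,i-1}I_{i+1,i}^2-(q+q^{-1})I_{i+1,i}I_{i,i-1}I_{i+1,i}+I_{i+1,i}^2I_{i,i-1}=-I_{i,i-1}$; and $I_{i,i-1}I_{j,j-1}=I_{j,j-1}I_{i,i-1}$ for $|i-j|>1$. The subalgebra of $U'_q(\mathrm{so}_n)$ generated by $I_{21},\dots,I_{n-1,n-2}$ is identified with $U'_q(\mathrm{so}_{n-1})$. Gel'fand–Tsetlin conventions. For $\mathbf m_s=(m_{1,s},\dots,m_{\lfloor s/2\rfloor,s})$ put $l_{j,2p+1}=m_{j,2p+1}+p-j+1$,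 $l_{j,2p}=m_{j,2p}+p-j$. A tableau for $U'_q(\mathrm{so}_N)$ is $\alpha=(\mathbf m_N,\dots,\mathbf m_2)$ with $\mathbf m_N$ fixed and entries differing from those of $\mathbf m_N$ by integers; $\alpha^{\pm j}_s$ is $\alpha$ with $m_{j,s}$ replaced by $m_{j,s}\pm1$; $|\beta\rangle=0$ if $\beta$ is not admissible. Classical type $T_{\mathbf m_N}$ (representation of $U'_q(\mathrm{so}_N)$). $\mathbf m_N$ has $\lfloor N/2\rfloor$ entries, all integers or all half-odd-integers, with $m_{1,2k+1}\ge\dots\ge m_{k,2k+1}\ge0$ ($N=2k+1$), $m_{1,2k}\ge\dots\ge m_{k-1,2k}\ge|m_{k,2k}|$ ($N=2k$). Basis $|\alpha\rangle$ over tableaux with $m_{1,2p+1}\ge m_{1,2p}\ge\dots\ge m_{p,2p+1}\ge m_{p,2p}\ge -m_{p,2p+1}$ and $m_{1,2p}\ge m_{1,2p-1}\ge\dots\ge m_{p-1,2p-1}\ge|m_{p,2p}|$. Action: $T(I_{2p+1,2p})|\alpha\rangle=\sum_{j=1}^p\frac{A^j_{2p}(\alpha)}{a(l_{j,2p})}|\alpha^{+j}_{2p}\rangle-\sum_{j=1}^p\frac{A^j_{2p}(\alpha^{-j}_{2p})}{a(l_{j,2p}-1)}|\alpha^{-j}_{2p}\rangle$, $T(I_{2p,2p-1})|\alpha\rangle=\sum_{j=1}^{p-1}\frac{B^j_{2p-1}(\alpha)}{b(l_{j,2p-1})[l_{j,2p-1}]}|\alpha^{+j}_{2p-1}\rangle-\sum_{j=1}^{p-1}\frac{B^j_{2p-1}(\alpha^{-j}_{2p-1})}{b(l_{j,2p-1}-1)[l_{j,2p-1}-1]}|\alpha^{-j}_{2p-1}\rangle+\mathrm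 i\,C_{2p-1}(\alpha)|\alpha\rangle$, $A^j_{2p}=\Big(\frac{\prod_{i=1}^p[l_{i,2p+1}+l_{j,2p}][l_{i,2p+1}-l_{j,2p}-1]\prod_{i=1}^{p-1}[l_{i,2p-1}+l_{j,2p}][l_{i,2p-1}-l_{j,2p}-1]}{\prod_{i\ne j}[l_{i,2p}+l_{j,2p}][l_{i,2p}-l_{j,2p}][l_{i,2p}+l_{j,2p}+1][l_{i,2p}-l_{j,2p}-1]}\Big)^{1/2}$, $B^j_{2p-1}=\Big(\frac{\prod_{i=1}^p[l_{i,2p}+l_{j,2p-1}][l_{i,2p}-l_{j,2p-1}]\prod_{i=1}^{p-1}[l_{i,2p-2}+l_{j,2p-1}][l_{i,2p-2}-l_{j,2p-1}]}{\prod_{i\ne j}^{p-1}[l_{i,2p-1}+l_{j,2p-1}][l_{i,2p-1}-l_{j,2p-1}][l_{i,2p-1}+l_{j,2p-1}-1][l_{i,2p-1}-l_{j,2p-1}-1]}\Big)^{1/2}$, $C_{2p-1}=\frac{\prod_{s=1}^p[l_{s,2p}]\prod_{s=1}^{p-1}[l_{s,2p-2}]}{\prod_{s=1}^{p-1}[l_{s,2p-1}][l_{s,2p-1}-1]}$, $a(l)=\{(q^{l+1}+q^{-l-1})(q^l+q^{-l})\}^{1/2}$, $b(l)=([2l+1][2l-1])^{1/2}$. Nonclassical type $T_{\epsilon,\mathbf m_N}$. $\epsilon=(\epsilon_2,\dots,\epsilon_N)\in\{\pm1\}^{N-1}$, $\mathbf m_N$ half-odd-integers with $m_{1,N}\ge\dots\ge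 m_{\lfloor N/2\rfloor,N}\ge\frac12$. Basis over tableaux with $m_{1,2p+1}\ge m_{1,2p}\ge\dots\ge m_{p,2p+1}\ge m_{p,2p}\ge\frac12$ and $m_{1,2p}\ge m_{1,2p-1}\ge\dots\ge m_{p-1,2p-1}\ge m_{p,2p}$. Action: $T(I_{2p+1,2p})|\alpha\rangle=\delta_{m_{p,2p},1/2}\frac{\epsilon_{2p+1}}{q^{1/2}-q^{-1/2}}D_{2p}(\alpha)|\alpha\rangle+\sum_{j=1}^p\frac{A^j_{2p}(\alpha)}{a'(l_{j,2p})}|\alpha^{+j}_{2p}\rangle-\sum_j\frac{A^j_{2p}(\alpha^{-j}_{2p})}{a'(l_{j,2p}-1)}|\alpha^{-j}_{2p}\rangle$ (last sum over $j\le p$, or $j\le p-1$ if $m_{p,2p}=\frac12$), $T(I_{2p,2p-1})|\alpha\rangle=\sum_{j=1}^{p-1}\frac{B^j_{2p-1}(\alpha)}{b(l_{j,2p-1})[l_{j,2p-1}]_+}|\alpha^{+j}_{2p-1}\rangle-\sum_{j=1}^{p-1}\frac{B^j_{2p-1}(\alpha^{-j}_{2p-1})}{b(l_{j,2p-1}-1)[l_{j,2p-1}-1]_+}|\alpha^{-j}_{2p-1}\rangle+\epsilon_{2p}\hat C_{2p-1}(\alpha)|\alpha\rangle$, $a'(l)=\{(q^{l+1}-q^{-l-1})(q^l-q^{-l})\}^{1/2}$, $\hat C_{2p-1}=\frac{\prod_{s=1}^p[l_{s,2p}]_+\prod_{s=1}^{p-1}[l_{s,2p-2}]_+}{\prod_{s=1}^{p-1}[l_{s,2p-1}]_+[l_{s,2p-1}-1]_+}$,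 $D_{2p}=\frac{\prod_{i=1}^p[l_{i,2p+1}-\frac12]\prod_{i=1}^{p-1}[l_{i,2p-1}-\frac12]}{\prod_{i=1}^{p-1}[l_{i,2p}+\frac12][l_{i,2p}-\frac12]}$. Hypothesis $(\mathrm A_{n-1})$: every finite dimensional representation of $U'_q(\mathrm{so}_{n-1})$ is completely reducible, and every irreducible finite dimensional representation of $U'_q(\mathrm{so}_{n-1})$ is equivalent to some $T_{\mathbf m_{n-1}}$ or some $T_{\epsilon,\mathbf m_{n-1}}$. *)

theory Defs
  imports Complex_Main
begin

text \<open>A representation of U'_q(so_N) is given by a finite basis index set S and,
for each k in {2..N}, the matrix rho k of the generator I_{k,k-1}; the entry rho k b a is
the coefficient of the basis vector b in the image of the basis vector a. The parameter h is the chosen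
square root q^(1/2) of q, so q = h^2.\<close>

definition vecs :: "'i set \<Rightarrow> ('i \<Rightarrow> complex) set" where
  "vecs S = {v. \<forall>x. x \<notin> S \<longrightarrow> v x = 0}"

definition act :: "'i set \<Rightarrow> ('i \<Rightarrow> 'i \<Rightarrow> complex) \<Rightarrow> ('i \<Rightarrow> complex) \<Rightarrow> ('i \<Rightarrow> complex)" where
  "act S A v = (\<lambda>b. if b \<in> S then (\<Sum>a\<in>S. A b a * v a) else 0)"

definition csubspace :: "('i \<Rightarrow> complex) set \<Rightarrow> bool" where
  "csubspace W \<longleftrightarrow> (\<lambda>_. 0) \<in> W \<and> (\<forall>u\<in>W. \<forall>v\<in>W. (\<lambda>x. u x + v x) \<in> W)
      \<and> (\<forall>c. \<forall>u\<in>W. (\<lambda>x. c * u x) \<in> W)"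

definition is_rep :: "complex \<Rightarrow> nat \<Rightarrow> 'i set \<Rightarrow> (nat \<Rightarrow> 'i \<Rightarrow> 'i \<Rightarrow> complex) \<Rightarrow> bool" where
  "is_rep h N S \<rho> \<longleftrightarrow> finite S \<and>
    (\<forall>i\<in>{2..N-1}. \<forall>v\<in>vecs S.
       (\<lambda>x. act S (\<rho> i) (act S (\<rho> i) (act S (\<rho> (i+1)) v)) x
          - (h^2 + inverse (h^2)) * act S (\<rho> i) (act S (\<rho> (i+1)) (act S (\<rho> i) v)) x
          + act S (\<rho> (i+1)) (act S (\<rho> i) (act S (\<rho> i) v)) x)
       = (\<lambda>x. - act S (\<rho> (i+1)) v x)
     \<and>
       (\<lambda>x. act S (\<rho> i) (act S (\<rho> (i+1)) (act S (\<rho> (i+1)) v)) x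
          - (h^2 + inverse (h^2)) * act S (\<rho> (i+1)) (act S (\<rho> i) (act S (\<rho> (i+1)) v)) x
          + act S (\<rho> (i+1)) (act S (\<rho> (i+1)) (act S (\<rho> i) v)) x)
       = (\<lambda>x. - act S (\<rho> i) v x)) \<and>
    (\<forall>i\<in>{2..N}. \<forall>j\<in>{2..N}. (i > j + 1 \<or> j > i + 1) \<longrightarrow>
       (\<forall>v\<in>vecs S. act S (\<rho> i) (act S (\<rho> j) v) = act S (\<rho> j) (act S (\<rho> i) v)))"

definition inv_subspace :: "'i set \<Rightarrow> (nat \<Rightarrow> 'i \<Rightarrow> 'i \<Rightarrow> complex) \<Rightarrow> nat set \<Rightarrow> ('i \<Rightarrow> complex) set \<Rightarrow> bool" where
  "inv_subspace S \<rho> K W \<longleftrightarrow> W \<subseteq> vecs S \<and> csubspace W \<and>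
     (\<forall>k\<in>K. \<forall>w\<in>W. act S (\<rho> k) w \<in> W)"

definition irred_sub :: "'i set \<Rightarrow> (nat \<Rightarrow> 'i \<Rightarrow> 'i \<Rightarrow> complex) \<Rightarrow> nat set \<Rightarrow> ('i \<Rightarrow> complex) set \<Rightarrow> bool" where
  "irred_sub S \<rho> K W \<longleftrightarrow> inv_subspace S \<rho> K W \<and> W \<noteq> {\<lambda>_. 0} \<and>
     (\<forall>U. inv_subspace S \<rho> K U \<and> U \<subseteq> W \<longrightarrow> U = {\<lambda>_. 0} \<or> U = W)"

definition irred_decomp :: "'i set \<Rightarrow> (nat \<Rightarrow> 'i \<Rightarrow> 'i \<Rightarrow> complex) \<Rightarrow> nat set \<Rightarrow> nat \<Rightarrow> (nat \<Rightarrow> ('i \<Rightarrow> complex) set) \<Rightarrow> bool" where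
  "irred_decomp S \<rho> K r W \<longleftrightarrow> (\<forall>i<r. irred_sub S \<rho> K (W i)) \<and>
     (\<forall>v\<in>vecs S. \<exists>!w. (\<forall>i<r. w i \<in> W i) \<and> (\<forall>i\<ge>r. w i = (\<lambda>_. 0)) \<and> v = (\<lambda>x. \<Sum>i<r. w i x))"

definition completely_reducible :: "'i set \<Rightarrow> (nat \<Rightarrow> 'i \<Rightarrow> 'i \<Rightarrow> complex) \<Rightarrow> nat set \<Rightarrow> bool" where
  "completely_reducible S \<rho> K \<longleftrightarrow> (\<exists>r W. irred_decomp S \<rho> K r W)"

text \<open>The subrepresentation on the invariant subspace W of (S, rho), restricted to the
generators of U'_q(so_N'), is equivalent to the representation (S', rho') of U'_q(so_N').\<close>
definition equiv_sub :: "'i set \<Rightarrow> (nat \<Rightarrow> 'i \<Rightarrow> 'i \<Rightarrow> complex) \<Rightarrow> ('i \<Rightarrow> complex) set \<Rightarrow> nat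
     \<Rightarrow> 'j set \<Rightarrow> (nat \<Rightarrow> 'j \<Rightarrow> 'j \<Rightarrow> complex) \<Rightarrow> bool" where
  "equiv_sub S \<rho> W N' S' \<rho>' \<longleftrightarrow> (\<exists>\<phi>.
     (\<forall>u\<in>vecs S'. \<forall>v\<in>vecs S'. \<phi> (\<lambda>x. u x + v x) = (\<lambda>x. \<phi> u x + \<phi> v x)) \<and>
     (\<forall>c. \<forall>u\<in>vecs S'. \<phi> (\<lambda>x. c * u x) = (\<lambda>x. c * \<phi> u x)) \<and>
     bij_betw \<phi> (vecs S') W \<and>
     (\<forall>k\<in>{2..N'}. \<forall>u\<in>vecs S'. \<phi> (act S' (\<rho>' k) u) = act S (\<rho> k) (\<phi> u)))"

section \<open>Gel'fand-Tsetlin tableaux (entries doubled, so that they are integers)\<close>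

text \<open>A tableau t : t s j = 2 m_{j,s} for 2 <= s <= N, 1 <= j <= s div 2, and 0 elsewhere.
M j = 2 m_{j,N}. Lval t s j = 2 l_{j,s}.\<close>

type_synonym tableau = "nat \<Rightarrow> nat \<Rightarrow> int"

definition Lval :: "tableau \<Rightarrow> nat \<Rightarrow> nat \<Rightarrow> int" where
  "Lval t s j = t s j + (if odd s then 2 * (int (s div 2) - int j + 1) else 2 * (int (s div 2) - int j))"

definition tplus :: "tableau \<Rightarrow> nat \<Rightarrow> nat \<Rightarrow> tableau" where
  "tplus t s j = t(s := (t s)(j := t s j + 2))"

definition tminus :: "tableau \<Rightarrow> nat \<Rightarrow> nat \<Rightarrow> tableau" where
  "tminus t s j = t(s := (t s)(j := t s j - 2))"

definition tab_shape :: "nat \<Rightarrow> (nat \<Rightarrow> int) \<Rightarrow> tableau \<Rightarrow> bool" where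
  "tab_shape N M t \<longleftrightarrow>
     (\<forall>s j. \<not> (2 \<le> s \<and> s \<le> N \<and> 1 \<le> j \<and> j \<le> s div 2) \<longrightarrow> t s j = 0) \<and>
     (\<forall>j\<in>{1..N div 2}. t N j = M j) \<and>
     (\<forall>s\<in>{2..N}. \<forall>j\<in>{1..s div 2}. \<forall>i\<in>{1..N div 2}. even (t s j - M i))"

definition cl_hw :: "nat \<Rightarrow> (nat \<Rightarrow> int) \<Rightarrow> bool" where
  "cl_hw N M \<longleftrightarrow> (let k = N div 2 in
     ((\<forall>j\<in>{1..k}. even (M j)) \<or> (\<forall>j\<in>{1..k}. odd (M j))) \<and>
     (if odd N then (\<forall>j\<in>{1..k-1}. M j \<ge> M (j+1)) \<and> M k \<ge> 0
      else (\<forall>j. 1 \<le> j \<and> j + 1 < k \<longrightarrow> M j \<ge> M (j+1)) \<and> M (k-1) \<ge> \<bar>M k\<bar>))"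

definition nc_hw :: "nat \<Rightarrow> (nat \<Rightarrow> int) \<Rightarrow> bool" where
  "nc_hw N M \<longleftrightarrow> (let k = N div 2 in
     (\<forall>j\<in>{1..k}. odd (M j)) \<and> (\<forall>j\<in>{1..k-1}. M j \<ge> M (j+1)) \<and> M k \<ge> 1)"

definition GT_cl :: "nat \<Rightarrow> (nat \<Rightarrow> int) \<Rightarrow> tableau set" where
  "GT_cl N M = {t. tab_shape N M t \<and>
     (\<forall>s\<in>{3..N}. odd s \<longrightarrow> (let p = s div 2 in
        (\<forall>j\<in>{1..p}. t s j \<ge> t (s-1) j) \<and> (\<forall>j\<in>{1..p-1}. t (s-1) j \<ge> t s (j+1)) \<and>
        t (s-1) p \<ge> - t s p)) \<and>
     (\<forall>s\<in>{2..N}. even s \<longrightarrow> (let p = s div 2 in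
        (\<forall>j\<in>{1..p-1}. t s j \<ge> t (s-1) j) \<and> (\<forall>j. 1 \<le> j \<and> j + 1 < p \<longrightarrow> t (s-1) j \<ge> t s (j+1)) \<and>
        (p \<ge> 2 \<longrightarrow> t (s-1) (p-1) \<ge> \<bar>t s p\<bar>)))}"

definition GT_nc :: "nat \<Rightarrow> (nat \<Rightarrow> int) \<Rightarrow> tableau set" where
  "GT_nc N M = {t. tab_shape N M t \<and>
     (\<forall>s\<in>{3..N}. odd s \<longrightarrow> (let p = s div 2 in
        (\<forall>j\<in>{1..p}. t s j \<ge> t (s-1) j) \<and> (\<forall>j\<in>{1..p-1}. t (s-1) j \<ge> t s (j+1)) \<and>
        t (s-1) p \<ge> 1)) \<and>
     (\<forall>s\<in>{2..N}. even s \<longrightarrow> (let p = s div 2 in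
        (\<forall>j\<in>{1..p-1}. t s j \<ge> t (s-1) j) \<and> (\<forall>j. 1 \<le> j \<and> j + 1 < p \<longrightarrow> t (s-1) j \<ge> t s (j+1)) \<and>
        (p \<ge> 2 \<longrightarrow> t (s-1) (p-1) \<ge> t s p)))}"

section \<open>q-numbers (arguments doubled: qn h x = [x/2], with q^(x/2) = h^x)\<close>

definition qn :: "complex \<Rightarrow> int \<Rightarrow> complex" where
  "qn h x = (h powi x - h powi (-x)) / (h^2 - h powi (-2))"

definition qp :: "complex \<Rightarrow> int \<Rightarrow> complex" where
  "qp h x = (h powi x + h powi (-x)) / (h^2 - h powi (-2))"

text \<open>a(l), a'(l), b(l) with argument L = 2l; square roots are principal (csqrt).\<close>
definition acl :: "complex \<Rightarrow> int \<Rightarrow> complex" where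
  "acl h L = csqrt ((h powi (L+2) + h powi (-L-2)) * (h powi L + h powi (-L)))"

definition anc :: "complex \<Rightarrow> int \<Rightarrow> complex" where
  "anc h L = csqrt ((h powi (L+2) - h powi (-L-2)) * (h powi L - h powi (-L)))"

definition bq :: "complex \<Rightarrow> int \<Rightarrow> complex" where
  "bq h L = csqrt (qn h (2*L+2) * qn h (2*L-2))"

definition Acoef :: "complex \<Rightarrow> nat \<Rightarrow> nat \<Rightarrow> tableau \<Rightarrow> complex" where
  "Acoef h r j t = (let p = r div 2; L = Lval t in csqrt (
     ((\<Prod>i\<in>{1..p}. qn h (L (r+1) i + L r j) * qn h (L (r+1) i - L r j - 2)) *
      (\<Prod>i\<in>{1..p-1}. qn h (L (r-1) i + L r j) * qn h (L (r-1) i - L r j - 2)))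
     / (\<Prod>i\<in>{1..p}-{j}. qn h (L r i + L r j) * qn h (L r i - L r j)
                         * qn h (L r i + L r j + 2) * qn h (L r i - L r j - 2))))"

definition Bcoef :: "complex \<Rightarrow> nat \<Rightarrow> nat \<Rightarrow> tableau \<Rightarrow> complex" where
  "Bcoef h r j t = (let p = (r+1) div 2; L = Lval t in csqrt (
     ((\<Prod>i\<in>{1..p}. qn h (L (r+1) i + L r j) * qn h (L (r+1) i - L r j)) *
      (\<Prod>i\<in>{1..p-1}. qn h (L (r-1) i + L r j) * qn h (L (r-1) i - L r j)))
     / (\<Prod>i\<in>{1..p-1}-{j}. qn h (L r i + L r j) * qn h (L r i - L r j)
                         * qn h (L r i + L r j - 2) * qn h (L r i - L r j - 2))))"

text \<open>C_{r}(t) for r = 2p-1 (f = qn), and hat C_{r}(t) (f = qp).\<close>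
definition Ccoef :: "(int \<Rightarrow> complex) \<Rightarrow> nat \<Rightarrow> tableau \<Rightarrow> complex" where
  "Ccoef f r t = (let p = (r+1) div 2; L = Lval t in
     ((\<Prod>s\<in>{1..p}. f (L (r+1) s)) * (\<Prod>s\<in>{1..p-1}. f (L (r-1) s)))
     / (\<Prod>s\<in>{1..p-1}. f (L r s) * f (L r s - 2)))"

definition Dcoef :: "complex \<Rightarrow> nat \<Rightarrow> tableau \<Rightarrow> complex" where
  "Dcoef h r t = (let p = r div 2; L = Lval t in
     ((\<Prod>i\<in>{1..p}. qn h (L (r+1) i - 1)) * (\<Prod>i\<in>{1..p-1}. qn h (L (r-1) i - 1)))
     / (\<Prod>i\<in>{1..p-1}. qn h (L r i + 1) * qn h (L r i - 1)))"

text \<open>Matrix of the generator I_{k,k-1} (which changes row r = k-1); entry (b, a) is the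
coefficient of |b> in T(I_{k,k-1})|a>.\<close>
definition T_cl :: "complex \<Rightarrow> nat \<Rightarrow> tableau \<Rightarrow> tableau \<Rightarrow> complex" where
  "T_cl h k b a = (let r = k - 1 in
     if even r then (let p = r div 2 in
        (\<Sum>j\<in>{1..p}. if b = tplus a r j then Acoef h r j a / acl h (Lval a r j) else 0)
      - (\<Sum>j\<in>{1..p}. if b = tminus a r j
           then Acoef h r j (tminus a r j) / acl h (Lval a r j - 2) else 0))
     else (let p = (r+1) div 2 in
        (\<Sum>j\<in>{1..p-1}. if b = tplus a r j
           then Bcoef h r j a / (bq h (Lval a r j) * qn h (Lval a r j)) else 0)
      - (\<Sum>j\<in>{1..p-1}. if b = tminus a r j
           then Bcoef h r j (tminus a r j) / (bq h (Lval a r j - 2) * qn h (Lval a r j - 2)) else 0)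
      + (if b = a then \<i> * Ccoef (qn h) r a else 0)))"

definition T_nc :: "complex \<Rightarrow> (nat \<Rightarrow> int) \<Rightarrow> nat \<Rightarrow> tableau \<Rightarrow> tableau \<Rightarrow> complex" where
  "T_nc h eps k b a = (let r = k - 1 in
     if even r then (let p = r div 2 in
        (if b = a \<and> a r p = 1 then of_int (eps (r+1)) / (h - inverse h) * Dcoef h r a else 0)
      + (\<Sum>j\<in>{1..p}. if b = tplus a r j then Acoef h r j a / anc h (Lval a r j) else 0)
      - (\<Sum>j\<in>{1..(if a r p = 1 then p - 1 else p)}. if b = tminus a r j
           then Acoef h r j (tminus a r j) / anc h (Lval a r j - 2) else 0))
     else (let p = (r+1) div 2 in
        (\<Sum>j\<in>{1..p-1}. if b = tplus a r j
           then Bcoef h r j a / (bq h (Lval a r j) * qp h (Lval a r j)) else 0)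
      - (\<Sum>j\<in>{1..p-1}. if b = tminus a r j
           then Bcoef h r j (tminus a r j) / (bq h (Lval a r j - 2) * qp h (Lval a r j - 2)) else 0)
      + (if b = a then of_int (eps (r+1)) * Ccoef (qp h) r a else 0)))"

definition eps_ok :: "nat \<Rightarrow> (nat \<Rightarrow> int) \<Rightarrow> bool" where
  "eps_ok N eps \<longleftrightarrow> (\<forall>k\<in>{2..N}. eps k = 1 \<or> eps k = -1)"

definition classical_type :: "complex \<Rightarrow> nat \<Rightarrow> 'i set \<Rightarrow> (nat \<Rightarrow> 'i \<Rightarrow> 'i \<Rightarrow> complex) \<Rightarrow> ('i \<Rightarrow> complex) set \<Rightarrow> bool" where
  "classical_type h N S \<rho> W \<longleftrightarrow>
     (\<exists>M. cl_hw N M \<and> equiv_sub S \<rho> W N (GT_cl N M) (T_cl h))"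

definition nonclassical_type :: "complex \<Rightarrow> nat \<Rightarrow> 'i set \<Rightarrow> (nat \<Rightarrow> 'i \<Rightarrow> 'i \<Rightarrow> complex) \<Rightarrow> ('i \<Rightarrow> complex) set \<Rightarrow> bool" where
  "nonclassical_type h N S \<rho> W \<longleftrightarrow>
     (\<exists>eps M. eps_ok N eps \<and> nc_hw N M \<and> equiv_sub S \<rho> W N (GT_nc N M) (T_nc h eps))"

text \<open>Hypothesis (A_N) (used with N = n-1). Every finite dimensional representation is
equivalent to one on a finite set of natural-number basis indices.\<close>
definition hypA :: "complex \<Rightarrow> nat \<Rightarrow> bool" where
  "hypA h N \<longleftrightarrow> (\<forall>(S :: nat set) \<rho>. is_rep h N S \<rho> \<longrightarrow>
      completely_reducible S \<rho> {2..N} \<and>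
      (irred_sub S \<rho> {2..N} (vecs S) \<longrightarrow>
         classical_type h N S \<rho> (vecs S) \<or> nonclassical_type h N S \<rho> (vecs S)))"

end

theory Submission
  imports Defs
begin

text \<open>By (A_{n-1}) the restriction to U'_q(so_{n-1}) is a direct sum of irreducible components, each
  of classical or nonclassical type (an invariant subspace is carried to a representation on a
  subset of the coordinates, where the hypothesis applies). In both types I_21 acts diagonally,
  with eigenvalues i[l] in the classical and \<plusminus>[l]_+ in the nonclassical case, and these never
  coincide because q is not a root of unity. Hence the sum of the classical components is spanned
  by the eigenvectors of I_21 with eigenvalues of the form i[l]. For n \<ge> 4 the generator I_{n,n-1}
  commutes with I_21, so it preserves this sum, which is then invariant under all of U'_q(so_n);
  by irreducibility it is zero or the whole space.\<close>

section \<open>Coordinate vectors and intertwiners\<close>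

definition basis_vec :: "'j \<Rightarrow> 'j \<Rightarrow> complex" where
  "basis_vec a = (\<lambda>x. if x = a then 1 else 0)"

definition diag_matrix :: "('j \<Rightarrow> complex) \<Rightarrow> 'j \<Rightarrow> 'j \<Rightarrow> complex" where
  "diag_matrix f = (\<lambda>b a. if b = a then f a else 0)"

definition linear_vecs :: "'j set \<Rightarrow> (('j \<Rightarrow> complex) \<Rightarrow> ('i \<Rightarrow> complex)) \<Rightarrow> bool" where
  "linear_vecs S' \<phi> \<longleftrightarrow>
     (\<forall>u\<in>vecs S'. \<forall>v\<in>vecs S'. \<phi> (\<lambda>x. u x + v x) = (\<lambda>x. \<phi> u x + \<phi> v x)) \<and>
     (\<forall>c. \<forall>u\<in>vecs S'. \<phi> (\<lambda>x. c * u x) = (\<lambda>x. c * \<phi> u x))"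

definition intertwines :: "nat set \<Rightarrow> 'j set \<Rightarrow> (nat \<Rightarrow> 'j \<Rightarrow> 'j \<Rightarrow> complex)
     \<Rightarrow> 'i set \<Rightarrow> (nat \<Rightarrow> 'i \<Rightarrow> 'i \<Rightarrow> complex) \<Rightarrow> (('j \<Rightarrow> complex) \<Rightarrow> ('i \<Rightarrow> complex)) \<Rightarrow> bool" where
  "intertwines K S' B S A \<phi> \<longleftrightarrow> linear_vecs S' \<phi> \<and>
     (\<forall>k\<in>K. \<forall>u\<in>vecs S'. \<phi> (act S' (B k) u) = act S (A k) (\<phi> u))"

lemma equiv_sub_iff_intertwines:
  "equiv_sub S A W N S' B \<longleftrightarrow> (\<exists>\<phi>. intertwines {2..N} S' B S A \<phi> \<and> bij_betw \<phi> (vecs S') W)"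
  unfolding equiv_sub_def intertwines_def linear_vecs_def by blast

lemma vecs_zero [simp]: "(\<lambda>_. 0) \<in> vecs S"
  and vecs_add [simp]: "u \<in> vecs S \<Longrightarrow> v \<in> vecs S \<Longrightarrow> (\<lambda>x. u x + v x) \<in> vecs S"
  and vecs_diff [simp]: "u \<in> vecs S \<Longrightarrow> v \<in> vecs S \<Longrightarrow> (\<lambda>x. u x - v x) \<in> vecs S"
  and vecs_scale [simp]: "u \<in> vecs S \<Longrightarrow> (\<lambda>x. c * u x) \<in> vecs S"
  and vecs_uminus [simp]: "u \<in> vecs S \<Longrightarrow> (\<lambda>x. - u x) \<in> vecs S"
  and basis_vec_in_vecs [simp]: "a \<in> S \<Longrightarrow> basis_vec a \<in> vecs S"
  and act_in_vecs [simp]: "act S A u \<in> vecs S"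
  by (simp_all add: vecs_def basis_vec_def act_def)

lemma vecs_sum: "(\<And>i. i \<in> I \<Longrightarrow> w i \<in> vecs S) \<Longrightarrow> (\<lambda>x. \<Sum>i\<in>I. w i x) \<in> vecs S"
  by (auto simp: vecs_def intro!: sum.neutral)

lemma csubspace_vecs: "csubspace (vecs S)"
  by (simp add: csubspace_def)

lemma act_add: "act S A (\<lambda>x. u x + v x) = (\<lambda>x. act S A u x + act S A v x)"
  by (auto simp: act_def sum.distrib distrib_left)

lemma act_scale: "act S A (\<lambda>x. c * u x) = (\<lambda>x. c * act S A u x)"
  by (auto simp: act_def sum_distrib_left ac_simps)

lemma act_zero [simp]: "act S A (\<lambda>_. 0) = (\<lambda>_. 0)"
  by (auto simp: act_def)

lemma act_sum: "act S A (\<lambda>x. \<Sum>i\<in>I. w i x) = (\<lambda>x. \<Sum>i\<in>I. act S A (w i) x)"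
  by (rule ext) (auto simp: act_def sum_distrib_left intro: sum.swap)

lemma act_infinite: "infinite S \<Longrightarrow> act S A u = (\<lambda>_. 0)"
  by (auto simp: act_def)

lemma act_diag_matrix:
  assumes "finite S" "u \<in> vecs S"
  shows "act S (diag_matrix f) u = (\<lambda>b. f b * u b)"
proof (rule ext)
  fix b
  have "(\<Sum>a\<in>S. diag_matrix f b a * u a) = (\<Sum>a\<in>S. if a = b then f b * u b else 0)"
    by (rule sum.cong) (auto simp: diag_matrix_def)
  then show "act S (diag_matrix f) u b = f b * u b"
    using assms by (auto simp: act_def vecs_def)
qed

lemma vecs_expand:
  assumes "finite S" "u \<in> vecs S"
  shows "u = (\<lambda>x. \<Sum>a\<in>S. u a * basis_vec a x)"
  using assms by (auto simp: vecs_def basis_vec_def if_distrib cong: if_cong)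

lemma csubspace_zero: "csubspace W \<Longrightarrow> (\<lambda>_. 0) \<in> W"
  and csubspace_add: "csubspace W \<Longrightarrow> u \<in> W \<Longrightarrow> v \<in> W \<Longrightarrow> (\<lambda>x. u x + v x) \<in> W"
  and csubspace_scale: "csubspace W \<Longrightarrow> u \<in> W \<Longrightarrow> (\<lambda>x. c * u x) \<in> W"
  by (simp_all add: csubspace_def)

lemma csubspace_diff: "csubspace W \<Longrightarrow> u \<in> W \<Longrightarrow> v \<in> W \<Longrightarrow> (\<lambda>x. u x - v x) \<in> W"
  using csubspace_add[of W u "\<lambda>x. (-1) * v x"] csubspace_scale[of W v "-1"] by simp

lemma csubspace_sum: "csubspace W \<Longrightarrow> (\<And>i. i \<in> I \<Longrightarrow> w i \<in> W) \<Longrightarrow> (\<lambda>x. \<Sum>i\<in>I. w i x) \<in> W"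
proof (induction I rule: infinite_finite_induct)
  case (insert a F)
  then show ?case using csubspace_add[of W "w a" "\<lambda>x. \<Sum>i\<in>F. w i x"] by simp
qed (simp_all add: csubspace_zero)

lemma csubspace_act_preimage:
  assumes "csubspace V"
  shows "csubspace {v \<in> vecs S. act S A v \<in> V}"
  using assms by (simp add: csubspace_def act_add act_scale)

lemma linear_vecs_add:
    "linear_vecs S' \<phi> \<Longrightarrow> u \<in> vecs S' \<Longrightarrow> v \<in> vecs S' \<Longrightarrow> \<phi> (\<lambda>x. u x + v x) = (\<lambda>x. \<phi> u x + \<phi> v x)"
  and linear_vecs_scale: "linear_vecs S' \<phi> \<Longrightarrow> u \<in> vecs S' \<Longrightarrow> \<phi> (\<lambda>x. c * u x) = (\<lambda>x. c * \<phi> u x)"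
  by (simp_all add: linear_vecs_def)

lemma linear_vecs_zero: "linear_vecs S' \<phi> \<Longrightarrow> \<phi> (\<lambda>_. 0) = (\<lambda>_. 0)"
  using linear_vecs_scale[of S' \<phi> "\<lambda>_. 0" 0] by simp

lemma linear_vecs_diff:
  assumes "linear_vecs S' \<phi>" "u \<in> vecs S'" "v \<in> vecs S'"
  shows "\<phi> (\<lambda>x. u x - v x) = (\<lambda>x. \<phi> u x - \<phi> v x)"
  using linear_vecs_add[OF assms(1,2), of "\<lambda>x. (-1) * v x"] linear_vecs_scale[OF assms(1,3), of "-1"]
    assms(3) by simp

lemma linear_vecs_sum:
  "linear_vecs S' \<phi> \<Longrightarrow> (\<And>i. i \<in> I \<Longrightarrow> w i \<in> vecs S') \<Longrightarrow>
    \<phi> (\<lambda>x. \<Sum>i\<in>I. w i x) = (\<lambda>x. \<Sum>i\<in>I. \<phi> (w i) x)"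
proof (induction I rule: infinite_finite_induct)
  case (insert a F)
  then show ?case using linear_vecs_add[of S' \<phi> "w a" "\<lambda>x. \<Sum>i\<in>F. w i x"] by (simp add: vecs_sum)
qed (simp_all add: linear_vecs_zero)

lemma linear_vecs_expand:
  assumes "linear_vecs S' \<phi>" "finite S'" "u \<in> vecs S'"
  shows "\<phi> u = (\<lambda>x. \<Sum>a\<in>S'. u a * \<phi> (basis_vec a) x)"
proof -
  have "\<phi> u = \<phi> (\<lambda>x. \<Sum>a\<in>S'. u a * basis_vec a x)"
    using vecs_expand[OF assms(2,3)] by simp
  also have "\<dots> = (\<lambda>x. \<Sum>a\<in>S'. u a * \<phi> (basis_vec a) x)"
    using assms(1) by (simp add: linear_vecs_sum[OF assms(1)] linear_vecs_scale)
  finally show ?thesis .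
qed

lemma intertwines_comp:
  assumes "intertwines K S'' C S' B \<phi>" "\<phi> ` vecs S'' \<subseteq> vecs S'" "intertwines K S' B S A \<psi>"
  shows "intertwines K S'' C S A (\<psi> \<circ> \<phi>)"
  using assms unfolding intertwines_def linear_vecs_def by (auto simp: image_subset_iff)

section \<open>Transport along intertwiners\<close>

definition serre_expr :: "'i set \<Rightarrow> (nat \<Rightarrow> 'i \<Rightarrow> 'i \<Rightarrow> complex) \<Rightarrow> complex \<Rightarrow> nat \<Rightarrow> nat
     \<Rightarrow> ('i \<Rightarrow> complex) \<Rightarrow> ('i \<Rightarrow> complex)" where
  "serre_expr S A c i j v = (\<lambda>x. act S (A i) (act S (A i) (act S (A j) v)) x
     - c * act S (A i) (act S (A j) (act S (A i) v)) x + act S (A j) (act S (A i) (act S (A i) v)) x)"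

lemma is_rep_iff_serre:
  "is_rep h N S \<rho> \<longleftrightarrow> finite S \<and>
    (\<forall>i\<in>{2..N-1}. \<forall>v\<in>vecs S.
       serre_expr S \<rho> (h^2 + inverse (h^2)) i (i+1) v = (\<lambda>x. - act S (\<rho> (i+1)) v x) \<and>
       serre_expr S \<rho> (h^2 + inverse (h^2)) (i+1) i v = (\<lambda>x. - act S (\<rho> i) v x)) \<and>
    (\<forall>i\<in>{2..N}. \<forall>j\<in>{2..N}. (i > j + 1 \<or> j > i + 1) \<longrightarrow>
       (\<forall>v\<in>vecs S. act S (\<rho> i) (act S (\<rho> j) v) = act S (\<rho> j) (act S (\<rho> i) v)))"
proof -
  have swap: "(\<lambda>x. a x - c * b x + d x) = (\<lambda>x. d x - c * b x + a x)" for a b d :: "'a \<Rightarrow> complex" and c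
    by (simp add: algebra_simps)
  show ?thesis
    unfolding is_rep_def serre_expr_def swap[of "act S (\<rho> (_+1)) (act S (\<rho> (_+1)) (act S (\<rho> _) _))"] ..
qed

lemma is_rep_restrict: "is_rep h N S \<rho> \<Longrightarrow> is_rep h (N - 1) S \<rho>"
  unfolding is_rep_def by (auto simp del: One_nat_def)

lemma is_rep_commute:
  assumes "is_rep h N S \<rho>" "i \<in> {2..N}" "j \<in> {2..N}" "i + 1 < j" "v \<in> vecs S"
  shows "act S (\<rho> i) (act S (\<rho> j) v) = act S (\<rho> j) (act S (\<rho> i) v)"
  using assms unfolding is_rep_def by blast

lemma intertwines_serre_expr:
  assumes it: "intertwines K S' B S A \<phi>" and "i \<in> K" "j \<in> K" "v \<in> vecs S'"
  shows "\<phi> (serre_expr S' B c i j v) = serre_expr S A c i j (\<phi> v)"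
proof -
  have L: "linear_vecs S' \<phi>" and I: "\<And>k u. k \<in> K \<Longrightarrow> u \<in> vecs S' \<Longrightarrow> \<phi> (act S' (B k) u) = act S (A k) (\<phi> u)"
    using it by (auto simp: intertwines_def)
  show ?thesis
    unfolding serre_expr_def
    by (simp add: linear_vecs_add[OF L] linear_vecs_diff[OF L] linear_vecs_scale[OF L] I assms)
qed

lemma is_rep_transport:
  assumes rep: "is_rep h N S A" and it: "intertwines {2..N} S' B S A \<phi>"
    and inj: "inj_on \<phi> (vecs S')" and im: "\<phi> ` vecs S' \<subseteq> vecs S" and fin: "finite S'"
  shows "is_rep h N S' B"
proof -
  have L: "linear_vecs S' \<phi>" and I: "\<And>k u. k \<in> {2..N} \<Longrightarrow> u \<in> vecs S' \<Longrightarrow> \<phi> (act S' (B k) u) = act S (A k) (\<phi> u)"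
    using it by (auto simp: intertwines_def)
  have pull: "x = y" if "\<phi> x = \<phi> y" "x \<in> vecs S'" "y \<in> vecs S'" for x y
    using inj_onD[OF inj] that .
  have neg: "\<phi> (\<lambda>x. - u x) = (\<lambda>x. - \<phi> u x)" if "u \<in> vecs S'" for u
    using linear_vecs_diff[OF L vecs_zero that] by (simp add: linear_vecs_zero[OF L])
  have serre_vecs: "serre_expr S' B c i j v \<in> vecs S'" for c i j v
    by (simp add: serre_expr_def)
  show ?thesis
    using rep fin unfolding is_rep_iff_serre
  proof (intro conjI ballI impI; elim conjE)
    fix i v assume "i \<in> {2..N-1}" "v \<in> vecs S'" and
      "\<forall>i\<in>{2..N-1}. \<forall>v\<in>vecs S.
         serre_expr S A (h^2 + inverse (h^2)) i (i+1) v = (\<lambda>x. - act S (A (i+1)) v x) \<and>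
         serre_expr S A (h^2 + inverse (h^2)) (i+1) i v = (\<lambda>x. - act S (A i) v x)"
    then show "serre_expr S' B (h^2 + inverse (h^2)) i (i+1) v = (\<lambda>x. - act S' (B (i+1)) v x)"
      and "serre_expr S' B (h^2 + inverse (h^2)) (i+1) i v = (\<lambda>x. - act S' (B i) v x)"
      using im by (auto intro!: pull simp: serre_vecs intertwines_serre_expr[OF it] neg I)
  next
    fix i j v assume "i \<in> {2..N}" "j \<in> {2..N}" "j + 1 < i \<or> i + 1 < j" "v \<in> vecs S'" and
      "\<forall>i\<in>{2..N}. \<forall>j\<in>{2..N}. (i > j + 1 \<or> j > i + 1) \<longrightarrow>
         (\<forall>v\<in>vecs S. act S (A i) (act S (A j) v) = act S (A j) (act S (A i) v))"
    then show "act S' (B i) (act S' (B j) v) = act S' (B j) (act S' (B i) v)"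
      using im by (auto intro!: pull simp: I)
  qed
qed

lemma inv_subspace_image:
  assumes it: "intertwines K S' B S A \<phi>" and im: "\<phi> ` vecs S' \<subseteq> vecs S"
    and U: "inv_subspace S' B K U"
  shows "inv_subspace S A K (\<phi> ` U)"
proof -
  have L: "linear_vecs S' \<phi>" and I: "\<And>k u. k \<in> K \<Longrightarrow> u \<in> vecs S' \<Longrightarrow> \<phi> (act S' (B k) u) = act S (A k) (\<phi> u)"
    using it by (auto simp: intertwines_def)
  have US: "U \<subseteq> vecs S'" and cU: "csubspace U" and Uk: "\<And>k u. k \<in> K \<Longrightarrow> u \<in> U \<Longrightarrow> act S' (B k) u \<in> U"
    using U by (auto simp: inv_subspace_def)
  have "\<phi> (\<lambda>_. 0) \<in> \<phi> ` U"
    using csubspace_zero[OF cU] by blast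
  moreover have "\<phi> (\<lambda>x. u x + v x) \<in> \<phi> ` U" if "u \<in> U" "v \<in> U" for u v
    using csubspace_add[OF cU that] by blast
  moreover have "\<phi> (\<lambda>x. c * u x) \<in> \<phi> ` U" if "u \<in> U" for c u
    using csubspace_scale[OF cU that] by blast
  moreover have "\<phi> (act S' (B k) u) \<in> \<phi> ` U" if "k \<in> K" "u \<in> U" for k u
    using Uk[OF that] by blast
  ultimately show ?thesis
    using US im unfolding inv_subspace_def csubspace_def
    by (auto simp: linear_vecs_zero[OF L] linear_vecs_add[OF L] linear_vecs_scale[OF L] I subset_iff)
qed

lemma irred_sub_transport:
  assumes irr: "irred_sub S A K W" and it: "intertwines K S' B S A \<phi>"
    and bij: "bij_betw \<phi> (vecs S') W"
  shows "irred_sub S' B K (vecs S')"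
proof -
  have L: "linear_vecs S' \<phi>" using it by (simp add: intertwines_def)
  have inj: "inj_on \<phi> (vecs S')" and im: "\<phi> ` vecs S' = W" using bij by (auto simp: bij_betw_def)
  have W: "inv_subspace S A K W" "W \<noteq> {\<lambda>_. 0}"
    and minimal: "\<And>U. inv_subspace S A K U \<Longrightarrow> U \<subseteq> W \<Longrightarrow> U = {\<lambda>_. 0} \<or> U = W"
    using irr unfolding irred_sub_def by blast+
  have WS: "W \<subseteq> vecs S" using W(1) by (simp add: inv_subspace_def)
  have zero: "\<phi> ` {\<lambda>_. 0} = {\<lambda>_. 0}" by (simp add: linear_vecs_zero[OF L])
  have "U = {\<lambda>_. 0} \<or> U = vecs S'" if U: "inv_subspace S' B K U" "U \<subseteq> vecs S'" for U
  proof -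
    have "\<phi> ` vecs S' \<subseteq> vecs S" using im WS by simp
    then have "inv_subspace S A K (\<phi> ` U)"
      using inv_subspace_image[OF it _ U(1)] by simp
    moreover have "\<phi> ` U \<subseteq> W" using image_mono[OF U(2), of \<phi>] im by simp
    ultimately have "\<phi> ` U = {\<lambda>_. 0} \<or> \<phi> ` U = W"
      by (rule minimal)
    then have "\<phi> ` U = \<phi> ` {\<lambda>_. 0} \<or> \<phi> ` U = \<phi> ` vecs S'"
      by (simp only: zero im)
    then show ?thesis
      by (simp only: inj_on_image_eq_iff[OF inj U(2)] vecs_zero empty_subsetI insert_subset order_refl)
  qed
  moreover have "vecs S' \<noteq> {\<lambda>_. 0}"
  proof
    assume "vecs S' = {\<lambda>_. 0}"
    then have "W = {\<lambda>_. 0}" using im zero by simp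
    with W(2) show False ..
  qed
  moreover have "inv_subspace S' B K (vecs S')"
    by (simp add: inv_subspace_def csubspace_vecs)
  ultimately show ?thesis
    unfolding irred_sub_def by blast
qed

lemma equiv_sub_trans:
  assumes "equiv_sub S' B (vecs S') N S'' C"
    and it: "intertwines {2..N} S' B S A \<psi>" and bij: "bij_betw \<psi> (vecs S') W"
  shows "equiv_sub S A W N S'' C"
proof -
  obtain \<phi> where it': "intertwines {2..N} S'' C S' B \<phi>" and bij': "bij_betw \<phi> (vecs S'') (vecs S')"
    using assms(1) unfolding equiv_sub_iff_intertwines by blast
  have "\<phi> ` vecs S'' \<subseteq> vecs S'" using bij' by (simp add: bij_betw_def)
  then have "intertwines {2..N} S'' C S A (\<psi> \<circ> \<phi>)"
    using intertwines_comp[OF it' _ it] by blast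
  then show ?thesis
    unfolding equiv_sub_iff_intertwines using bij_betw_trans[OF bij' bij] by blast
qed

lemma csubspace_coordinates:
  assumes fin: "finite S" and WS: "W \<subseteq> vecs S" and cW: "csubspace W"
  obtains T where "T \<subseteq> S" "\<And>g. g \<in> vecs T \<Longrightarrow> \<exists>w\<in>W. \<forall>x\<in>T. w x = g x"
    "\<And>w. w \<in> W \<Longrightarrow> \<forall>x\<in>T. w x = 0 \<Longrightarrow> w = (\<lambda>_. 0)"
proof -
  define onto where "onto T \<longleftrightarrow> T \<subseteq> S \<and> (\<forall>g\<in>vecs T. \<exists>w\<in>W. \<forall>x\<in>T. w x = g x)" for T
  have "onto {}"
    using csubspace_zero[OF cW] by (auto simp: onto_def)
  moreover have "\<forall>T. onto T \<longrightarrow> card T < card S + 1"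
    using card_mono[OF fin] by (auto simp: onto_def less_Suc_eq_le)
  ultimately obtain T where T: "onto T" and max: "\<And>T'. onto T' \<Longrightarrow> card T' \<le> card T"
    using ex_has_greatest_nat[of onto "{}" card "card S + 1"] by blast
  have TS: "T \<subseteq> S" using T by (simp add: onto_def)
  have "w = (\<lambda>_. 0)" if w: "w \<in> W" "\<forall>x\<in>T. w x = 0" for w
  proof (rule ccontr)
    assume "w \<noteq> (\<lambda>_. 0)"
    then obtain x0 where x0: "w x0 \<noteq> 0" by auto
    then have "x0 \<notin> T" "x0 \<in> S" using w WS by (auto simp: vecs_def)
    \<comment> \<open>adding a multiple of w corrects the value at x0 without changing the values on T\<close>
    have "onto (insert x0 T)" unfolding onto_def
    proof (intro conjI ballI)
      show "insert x0 T \<subseteq> S" using TS \<open>x0 \<in> S\<close> by auto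
    next
      fix g assume "g \<in> vecs (insert x0 T)"
      have "(\<lambda>x. if x \<in> T then g x else 0) \<in> vecs T" by (simp add: vecs_def)
      then obtain u where u: "u \<in> W" "\<forall>x\<in>T. u x = g x" using T by (auto simp: onto_def)
      define c where "c = (g x0 - u x0) / w x0"
      show "\<exists>w\<in>W. \<forall>x\<in>insert x0 T. w x = g x"
      proof (rule bexI)
        show "\<forall>x\<in>insert x0 T. u x + c * w x = g x"
          using u(2) w(2) x0 by (auto simp: c_def)
        show "(\<lambda>x. u x + c * w x) \<in> W"
          using csubspace_add[OF cW u(1) csubspace_scale[OF cW w(1)]] .
      qed
    qed
    then have "card (insert x0 T) \<le> card T" by (rule max)
    then show False using finite_subset[OF TS fin] \<open>x0 \<notin> T\<close> by simp
  qed
  with TS T show ?thesis by (intro that) (auto simp: onto_def)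
qed

lemma csubspace_coordinate_iso:
  assumes fin: "finite S" and WS: "W \<subseteq> vecs S" and cW: "csubspace W"
  obtains T \<psi> where "T \<subseteq> S" "linear_vecs T \<psi>" "bij_betw \<psi> (vecs T) W"
    "\<And>g w. g \<in> vecs T \<Longrightarrow> w \<in> W \<Longrightarrow> \<forall>x\<in>T. w x = g x \<Longrightarrow> \<psi> g = w"
proof -
  obtain T where TS: "T \<subseteq> S" and onto: "\<And>g. g \<in> vecs T \<Longrightarrow> \<exists>w\<in>W. \<forall>x\<in>T. w x = g x"
    and vanish: "\<And>w. w \<in> W \<Longrightarrow> \<forall>x\<in>T. w x = 0 \<Longrightarrow> w = (\<lambda>_. 0)"
    using csubspace_coordinates[OF fin WS cW] by blast
  have "w = w'" if "w \<in> W" "w' \<in> W" "\<forall>x\<in>T. w x = w' x" for w w'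
    using vanish[OF csubspace_diff[OF cW that(1,2)]] that(3) by (simp add: fun_eq_iff)
  then have T: "\<exists>!w\<in>W. \<forall>x\<in>T. w x = g x" if "g \<in> vecs T" for g
    using onto[OF that] by (metis (no_types, lifting))
  define \<psi> where "\<psi> g = (THE w. w \<in> W \<and> (\<forall>x\<in>T. w x = g x))" for g
  have \<psi>: "\<psi> g \<in> W" "\<forall>x\<in>T. \<psi> g x = g x" if "g \<in> vecs T" for g
    using theI'[OF T[OF that]] unfolding \<psi>_def by blast+
  have \<psi>_eqI: "\<psi> g = w" if "g \<in> vecs T" "w \<in> W" "\<forall>x\<in>T. w x = g x" for g w
    unfolding \<psi>_def using that by (intro the1_equality[OF T[OF that(1)]]) simp
  have L: "linear_vecs T \<psi>"
    unfolding linear_vecs_def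
  proof (intro conjI ballI allI)
    fix u v assume "u \<in> vecs T" "v \<in> vecs T"
    then show "\<psi> (\<lambda>x. u x + v x) = (\<lambda>x. \<psi> u x + \<psi> v x)"
      using \<psi>[of u] \<psi>[of v] by (intro \<psi>_eqI csubspace_add[OF cW]) simp_all
  next
    fix c u assume "u \<in> vecs T"
    then show "\<psi> (\<lambda>x. c * u x) = (\<lambda>x. c * \<psi> u x)"
      using \<psi>[of u] by (intro \<psi>_eqI csubspace_scale[OF cW]) simp_all
  qed
  have "inj_on \<psi> (vecs T)"
  proof (rule inj_onI, rule ext)
    fix u v x assume "u \<in> vecs T" "v \<in> vecs T" "\<psi> u = \<psi> v"
    then show "u x = v x"
      using \<psi>(2)[of u] \<psi>(2)[of v] by (cases "x \<in> T") (auto simp: vecs_def)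
  qed
  moreover have "W \<subseteq> \<psi> ` vecs T"
  proof
    fix w assume "w \<in> W"
    have g: "(\<lambda>x. if x \<in> T then w x else 0) \<in> vecs T" by (simp add: vecs_def)
    then have "w = \<psi> (\<lambda>x. if x \<in> T then w x else 0)"
      using \<psi>_eqI[OF g \<open>w \<in> W\<close>] by simp
    then show "w \<in> \<psi> ` vecs T" using g by (rule image_eqI)
  qed
  ultimately have "bij_betw \<psi> (vecs T) W"
    using \<psi>(1) unfolding bij_betw_def by blast
  with TS L show ?thesis using \<psi>_eqI by (rule that)
qed

lemma inv_subspace_coordinates:
  fixes A :: "nat \<Rightarrow> 'i \<Rightarrow> 'i \<Rightarrow> complex"
  assumes fin: "finite S" and inv: "inv_subspace S A K W"
  obtains T and B :: "nat \<Rightarrow> 'i \<Rightarrow> 'i \<Rightarrow> complex" and \<psi>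
  where "T \<subseteq> S" "intertwines K T B S A \<psi>" "bij_betw \<psi> (vecs T) W"
proof -
  have WS: "W \<subseteq> vecs S" and cW: "csubspace W" and Wk: "\<And>k w. k \<in> K \<Longrightarrow> w \<in> W \<Longrightarrow> act S (A k) w \<in> W"
    using inv unfolding inv_subspace_def by blast+
  obtain T \<psi> where TS: "T \<subseteq> S" and L: "linear_vecs T \<psi>" and bij: "bij_betw \<psi> (vecs T) W"
    and \<psi>_eqI: "\<And>g w. g \<in> vecs T \<Longrightarrow> w \<in> W \<Longrightarrow> \<forall>x\<in>T. w x = g x \<Longrightarrow> \<psi> g = w"
    using csubspace_coordinate_iso[OF fin WS cW] by blast
  have finT: "finite T" using finite_subset[OF TS fin] .
  define B where "B k b a = act S (A k) (\<psi> (basis_vec a)) b" for k b a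
  have "\<psi> (act T (B k) u) = act S (A k) (\<psi> u)" if k: "k \<in> K" and u: "u \<in> vecs T" for k u
  proof (rule \<psi>_eqI)
    show "act T (B k) u \<in> vecs T" "act S (A k) (\<psi> u) \<in> W"
      using Wk[OF k] bij u by (auto simp: bij_betw_def)
    have "act S (A k) (\<psi> u) = (\<lambda>x. \<Sum>a\<in>T. u a * B k x a)"
      unfolding linear_vecs_expand[OF L finT u] by (simp add: act_sum act_scale B_def)
    then show "\<forall>x\<in>T. act S (A k) (\<psi> u) x = act T (B k) u x"
      by (simp add: act_def mult.commute)
  qed
  then have "intertwines K T B S A \<psi>"
    using L by (simp add: intertwines_def)
  with TS show ?thesis using bij by (rule that)
qed

lemma hypA_irred_sub_type:
  fixes S :: "nat set" and \<rho> :: "nat \<Rightarrow> nat \<Rightarrow> nat \<Rightarrow> complex"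
  assumes rep: "is_rep h N S \<rho>" and hA: "hypA h N" and irr: "irred_sub S \<rho> {2..N} W"
  shows "classical_type h N S \<rho> W \<or> nonclassical_type h N S \<rho> W"
proof -
  have fin: "finite S" using rep by (simp add: is_rep_def)
  have inv: "inv_subspace S \<rho> {2..N} W" using irr by (simp add: irred_sub_def)
  then have WS: "W \<subseteq> vecs S" by (simp add: inv_subspace_def)
  obtain T and B :: "nat \<Rightarrow> nat \<Rightarrow> nat \<Rightarrow> complex" and \<psi>
    where T: "T \<subseteq> S" and it: "intertwines {2..N} T B S \<rho> \<psi>" and bij: "bij_betw \<psi> (vecs T) W"
    using inv_subspace_coordinates[OF fin inv] by blast
  have "is_rep h N T B"
    using is_rep_transport[OF rep it] bij WS finite_subset[OF T fin] by (auto simp: bij_betw_def)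
  moreover have "irred_sub T B {2..N} (vecs T)"
    using irred_sub_transport[OF irr it bij] .
  ultimately have "classical_type h N T B (vecs T) \<or> nonclassical_type h N T B (vecs T)"
    using hA unfolding hypA_def by blast
  then show ?thesis
    unfolding classical_type_def nonclassical_type_def using equiv_sub_trans[OF _ it bij] by blast
qed

lemma irred_sub_annihilated_line:
  assumes irr: "irred_sub S A K W" and zero: "\<forall>k\<in>K. \<forall>w\<in>W. act S (A k) w = (\<lambda>_. 0)"
    and w0: "w0 \<in> W" "w0 \<noteq> (\<lambda>_. 0)" and w: "w \<in> W"
  shows "\<exists>c. w = (\<lambda>x. c * w0 x)"
proof -
  have inv: "inv_subspace S A K W" and minimal: "\<And>U. inv_subspace S A K U \<Longrightarrow> U \<subseteq> W \<Longrightarrow> U = {\<lambda>_. 0} \<or> U = W"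
    using irr unfolding irred_sub_def by blast+
  have WS: "W \<subseteq> vecs S" and cW: "csubspace W" using inv by (auto simp: inv_subspace_def)
  define U where "U = {u. \<exists>c. u = (\<lambda>x. c * w0 x)}"
  have "U \<subseteq> W" using csubspace_scale[OF cW w0(1)] by (auto simp: U_def)
  moreover have "(\<lambda>_. 0) \<in> U" "w0 \<in> U"
    unfolding U_def by (auto intro: exI[of _ 0] exI[of _ 1])
  moreover have "(\<lambda>x. u x + v x) \<in> U" if "u \<in> U" "v \<in> U" for u v
    using that unfolding U_def by (auto intro: exI[of _ "_ + _"] simp: distrib_right)
  moreover have "(\<lambda>x. c * u x) \<in> U" if "u \<in> U" for c u
    using that unfolding U_def by (auto intro: exI[of _ "_ * _"] simp: mult.assoc)
  ultimately have "inv_subspace S A K U"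
    unfolding inv_subspace_def csubspace_def using WS zero by auto
  then have "U = W"
    using minimal \<open>U \<subseteq> W\<close> \<open>w0 \<in> U\<close> w0(2) by blast
  then show ?thesis using w by (auto simp: U_def)
qed

text \<open>Over an infinite index set act is identically zero, so the irreducible W would be a line,
  while vecs S' is not.\<close>
lemma equiv_sub_finite:
  assumes eq: "equiv_sub S A W N S' B" and irr: "irred_sub S A {2..N} W"
  shows "finite S'"
proof (rule ccontr)
  assume inf: "infinite S'"
  obtain \<phi> where it: "intertwines {2..N} S' B S A \<phi>" and bij: "bij_betw \<phi> (vecs S') W"
    using eq unfolding equiv_sub_iff_intertwines by blast
  have L: "linear_vecs S' \<phi>" using it by (simp add: intertwines_def)
  have inj: "inj_on \<phi> (vecs S')" and im: "\<phi> ` vecs S' = W" using bij by (auto simp: bij_betw_def)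
  have "act S (A k) w = (\<lambda>_. 0)" if k: "k \<in> {2..N}" and w: "w \<in> W" for k w
  proof -
    obtain u where "u \<in> vecs S'" "w = \<phi> u" using im w by blast
    then show ?thesis
      using it k act_infinite[OF inf] linear_vecs_zero[OF L] by (simp add: intertwines_def)
  qed
  note line = irred_sub_annihilated_line[OF irr, OF ballI, OF ballI, OF this]
  obtain a where a: "a \<in> S'" using infinite_imp_nonempty[OF inf] by blast
  have "infinite (S' - {a})" using inf by simp
  then obtain b where b: "b \<in> S'" "b \<noteq> a" using infinite_imp_nonempty by blast
  have "basis_vec a \<noteq> (\<lambda>_. 0)" by (auto simp: basis_vec_def fun_eq_iff)
  then have "\<phi> (basis_vec a) \<noteq> \<phi> (\<lambda>_. 0)"
    using inj_on_eq_iff[OF inj] a by simp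
  then have "\<phi> (basis_vec a) \<noteq> (\<lambda>_. 0)" by (simp add: linear_vecs_zero[OF L])
  moreover have "\<phi> (basis_vec a) \<in> W" "\<phi> (basis_vec b) \<in> W" using im a b by auto
  ultimately obtain c where "\<phi> (basis_vec b) = (\<lambda>x. c * \<phi> (basis_vec a) x)"
    using line by blast
  also have "\<dots> = \<phi> (\<lambda>x. c * basis_vec a x)" using linear_vecs_scale[OF L] a by simp
  finally have "basis_vec b = (\<lambda>x. c * basis_vec a x)"
    using inj_on_eq_iff[OF inj] a b by simp
  then have "basis_vec b b = c * basis_vec a b" by (rule fun_cong)
  then show False using b by (simp add: basis_vec_def)
qed

section \<open>The spectrum of I_21\<close>

lemma T_cl_2: "T_cl h 2 = diag_matrix (\<lambda>a. \<i> * qn h (Lval a 2 1))"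
  by (simp add: fun_eq_iff T_cl_def Ccoef_def diag_matrix_def Let_def numeral_2_eq_2)

lemma T_nc_2: "T_nc h eps 2 = diag_matrix (\<lambda>a. of_int (eps 2) * qp h (Lval a 2 1))"
  by (simp add: fun_eq_iff T_nc_def Ccoef_def diag_matrix_def Let_def numeral_2_eq_2)

lemma equiv_sub_diagonal_eigenvalue:
  assumes eq: "equiv_sub S A W N S' B" and fin: "finite S'" and k: "k \<in> {2..N}"
    and diag: "B k = diag_matrix f"
    and w: "w \<in> W" "w \<noteq> (\<lambda>_. 0)" and eigen: "act S (A k) w = (\<lambda>x. c * w x)"
  shows "\<exists>a\<in>S'. f a = c"
proof -
  obtain \<phi> where it: "intertwines {2..N} S' B S A \<phi>" and bij: "bij_betw \<phi> (vecs S') W"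
    using eq unfolding equiv_sub_iff_intertwines by blast
  have L: "linear_vecs S' \<phi>" using it by (simp add: intertwines_def)
  have inj: "inj_on \<phi> (vecs S')" and im: "\<phi> ` vecs S' = W" using bij by (auto simp: bij_betw_def)
  obtain u where u: "u \<in> vecs S'" "w = \<phi> u" using im w(1) by blast
  have "\<phi> (act S' (B k) u) = act S (A k) (\<phi> u)" using it k u(1) by (simp add: intertwines_def)
  also have "\<dots> = \<phi> (\<lambda>x. c * u x)" using eigen u linear_vecs_scale[OF L] by simp
  finally have "act S' (B k) u = (\<lambda>x. c * u x)"
    using inj_on_eq_iff[OF inj] u(1) by simp
  then have "(\<lambda>b. f b * u b) = (\<lambda>x. c * u x)"
    using act_diag_matrix[OF fin u(1)] diag by simp
  moreover have "u \<noteq> (\<lambda>_. 0)" using w(2) u linear_vecs_zero[OF L] by auto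
  then obtain a where "u a \<noteq> 0" by auto
  moreover then have "a \<in> S'" using u(1) by (auto simp: vecs_def)
  ultimately show ?thesis by (metis mult_cancel_right)
qed

lemma equiv_sub_diagonal_eigenbasis:
  assumes eq: "equiv_sub S A W N S' B" and fin: "finite S'" and k: "k \<in> {2..N}"
    and diag: "B k = diag_matrix f" and WS: "W \<subseteq> vecs S" and V: "csubspace V"
    and eigen_V: "\<And>a y. a \<in> S' \<Longrightarrow> y \<in> vecs S \<Longrightarrow> act S (A k) y = (\<lambda>x. f a * y x) \<Longrightarrow> y \<in> V"
  shows "W \<subseteq> V"
proof
  obtain \<phi> where it: "intertwines {2..N} S' B S A \<phi>" and bij: "bij_betw \<phi> (vecs S') W"
    using eq unfolding equiv_sub_iff_intertwines by blast
  have L: "linear_vecs S' \<phi>" using it by (simp add: intertwines_def)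
  have im: "\<phi> ` vecs S' = W" using bij by (auto simp: bij_betw_def)
  have "\<phi> (basis_vec a) \<in> V" if a: "a \<in> S'" for a
  proof (rule eigen_V[OF a])
    show "\<phi> (basis_vec a) \<in> vecs S" using im WS a by auto
    have "act S (A k) (\<phi> (basis_vec a)) = \<phi> (act S' (B k) (basis_vec a))"
      using it k a by (simp add: intertwines_def)
    also have "act S' (B k) (basis_vec a) = (\<lambda>b. f b * basis_vec a b)"
      using act_diag_matrix[OF fin basis_vec_in_vecs[OF a]] diag by simp
    also have "\<dots> = (\<lambda>x. f a * basis_vec a x)" by (auto simp: basis_vec_def fun_eq_iff)
    finally show "act S (A k) (\<phi> (basis_vec a)) = (\<lambda>x. f a * \<phi> (basis_vec a) x)"
      using linear_vecs_scale[OF L] a by simp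
  qed
  fix w assume "w \<in> W"
  then obtain u where u: "u \<in> vecs S'" "w = \<phi> u" using im by blast
  then show "w \<in> V"
    unfolding linear_vecs_expand[OF L fin u(1)]
    by (auto intro!: csubspace_sum[OF V] csubspace_scale[OF V] \<open>\<And>a. a \<in> S' \<Longrightarrow> \<phi> (basis_vec a) \<in> V\<close>)
qed

lemma powi_fourth_root_of_unity:
  fixes h :: complex
  assumes h0: "h \<noteq> 0" and nr: "\<forall>k::nat. k > 0 \<longrightarrow> (h^2)^k \<noteq> 1"
    and root: "(h powi m) ^ 4 = 1"
  shows "m = 0"
proof (rule ccontr)
  assume m: "m \<noteq> 0"
  have "h powi (4 * m) = 1"
    using root power_int_power'[of h m 4] by (simp add: mult.commute)
  then have "h powi (4 * \<bar>m\<bar>) = 1"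
    by (cases "m \<ge> 0") (simp_all add: power_int_minus)
  moreover have "4 * \<bar>m\<bar> = int (4 * nat \<bar>m\<bar>)" by simp
  ultimately have "h ^ (4 * nat \<bar>m\<bar>) = 1" by (metis power_int_of_nat)
  then have "(h^2) ^ (2 * nat \<bar>m\<bar>) = 1" by (simp add: power_mult[symmetric])
  with nr m show False by simp
qed

lemma qn_denominator_nonzero:
  fixes h :: complex
  assumes h0: "h \<noteq> 0" and nr: "\<forall>k::nat. k > 0 \<longrightarrow> (h^2)^k \<noteq> 1"
  shows "h^2 - h powi (-2) \<noteq> 0"
proof
  assume "h^2 - h powi (-2) = 0"
  then have "h^2 = inverse (h^2)" by (simp add: power_int_minus)
  then have "h^2 * h^2 = 1" using h0 by (metis field_class.field_inverse power_not_zero)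
  then have "(h^2)^2 = 1" by (simp add: power2_eq_square)
  with nr show False by (metis zero_less_numeral)
qed

lemma imag_qn_eq_qp_factorization:
  fixes h :: complex
  assumes h0: "h \<noteq> 0" and nr: "\<forall>k::nat. k > 0 \<longrightarrow> (h^2)^k \<noteq> 1" and e: "e = 1 \<or> e = -1"
    and eq: "\<i> * qn h a = of_int e * qp h b"
  shows "(\<i> * h powi a - of_int e * h powi b) * (h powi a * h powi b + of_int e * \<i>) = 0"
proof -
  define X where "X = h powi a"
  define Y where "Y = h powi b"
  have X0: "X \<noteq> 0" and Y0: "Y \<noteq> 0" using h0 by (auto simp: X_def Y_def power_int_not_zero)
  have "\<i> * (X - inverse X) = of_int e * (Y + inverse Y)"
    using eq qn_denominator_nonzero[OF h0 nr] by (simp add: qn_def qp_def X_def Y_def power_int_minus)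
  then have "\<i> * (X - inverse X) * (X * Y) = of_int e * (Y + inverse Y) * (X * Y)" by simp
  moreover have "\<i> * (X - inverse X) * (X * Y) = \<i> * X * X * Y - \<i> * Y"
    using X0 by (simp add: algebra_simps)
  moreover have "of_int e * (Y + inverse Y) * (X * Y) = of_int e * X * Y * Y + of_int e * X"
    using Y0 by (simp add: algebra_simps)
  ultimately have "\<i> * X * X * Y - \<i> * Y = of_int e * X * Y * Y + of_int e * X" by simp
  moreover have "(of_int e :: complex) * of_int e = 1" using e by auto
  ultimately have "(\<i> * X - of_int e * Y) * (X * Y + of_int e * \<i>) = 0"
    by (simp add: algebra_simps)
  then show ?thesis by (simp only: X_def Y_def)
qed

text \<open>With X = q^(a/2) and Y = q^(b/2), the equation i[a/2] = e[b/2]_+ factors as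
  (iX - eY)(XY + ei) = 0, so q^((a-b)/2) or q^((a+b)/2) would be a fourth root of unity.\<close>
lemma imag_qn_neq_qp:
  fixes h :: complex
  assumes h0: "h \<noteq> 0" and nr: "\<forall>k::nat. k > 0 \<longrightarrow> (h^2)^k \<noteq> 1" and e: "e = 1 \<or> e = -1"
  shows "\<i> * qn h a \<noteq> of_int e * qp h b"
proof
  assume "\<i> * qn h a = of_int e * qp h b"
  then have "\<i> * h powi a - of_int e * h powi b = 0 \<or> h powi a * h powi b + of_int e * \<i> = 0"
    using imag_qn_eq_qp_factorization[OF h0 nr e] by (simp only: mult_eq_0_iff)
  moreover have e4: "(- (of_int e * \<i> :: complex)) ^ 4 = 1" using e by auto
  ultimately show False
  proof (elim disjE)
    assume 1: "\<i> * h powi a - of_int e * h powi b = 0"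
    then have "h powi a = - (\<i> * (of_int e * h powi b))"
      by (metis add.inverse_inverse i_squared minus_mult_left mult.assoc mult_1 right_minus_eq)
    then have "h powi (a - b) = - (of_int e * \<i>)"
      using h0 by (simp add: power_int_diff power_int_not_zero field_simps)
    then have "(h powi (a - b)) ^ 4 = 1" using e4 by simp
    then have "a - b = 0" by (rule powi_fourth_root_of_unity[OF h0 nr])
    then have "\<i> = of_int e" using 1 h0 by (simp add: power_int_not_zero)
    then show False using e by (auto simp: complex_eq_iff)
  next
    assume "h powi a * h powi b + of_int e * \<i> = 0"
    then have "h powi (a + b) = - (of_int e * \<i>)"
      using h0 by (simp add: power_int_add eq_neg_iff_add_eq_0)
    moreover from this have "(h powi (a + b)) ^ 4 = 1" using e4 by simp
    then have "a + b = 0" by (rule powi_fourth_root_of_unity[OF h0 nr])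
    ultimately show False using e by (auto simp: complex_eq_iff)
  qed
qed

lemma nonclassical_type_no_imag_qn_eigenvector:
  fixes h :: complex
  assumes h0: "h \<noteq> 0" and nr: "\<forall>k::nat. k > 0 \<longrightarrow> (h^2)^k \<noteq> 1" and N: "2 \<le> N"
    and nc: "nonclassical_type h N S \<rho> W" and irr: "irred_sub S \<rho> {2..N} W"
    and w: "w \<in> W" and eigen: "act S (\<rho> 2) w = (\<lambda>x. \<i> * qn h a * w x)"
  shows "w = (\<lambda>_. 0)"
proof (rule ccontr)
  assume "w \<noteq> (\<lambda>_. 0)"
  obtain eps M where eps: "eps_ok N eps" and eq: "equiv_sub S \<rho> W N (GT_nc N M) (T_nc h eps)"
    using nc unfolding nonclassical_type_def by blast
  have "\<exists>t\<in>GT_nc N M. of_int (eps 2) * qp h (Lval t 2 1) = \<i> * qn h a"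
    using equiv_sub_diagonal_eigenvalue[OF eq equiv_sub_finite[OF eq irr] _ T_nc_2 w
        \<open>w \<noteq> (\<lambda>_. 0)\<close> eigen] N by simp
  moreover have "eps 2 = 1 \<or> eps 2 = -1" using eps N by (simp add: eps_ok_def)
  ultimately show False using imag_qn_neq_qp[OF h0 nr] by metis
qed

lemma classical_type_imag_qn_eigenbasis:
  assumes N: "2 \<le> N" and cl: "classical_type h N S \<rho> W" and irr: "irred_sub S \<rho> {2..N} W"
    and V: "csubspace V"
    and eigen_V: "\<And>a y. y \<in> vecs S \<Longrightarrow> act S (\<rho> 2) y = (\<lambda>x. \<i> * qn h a * y x) \<Longrightarrow> y \<in> V"
  shows "W \<subseteq> V"
proof -
  obtain M where eq: "equiv_sub S \<rho> W N (GT_cl N M) (T_cl h)"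
    using cl unfolding classical_type_def by blast
  have "W \<subseteq> vecs S" using irr by (simp add: irred_sub_def inv_subspace_def)
  with N show ?thesis
    using equiv_sub_diagonal_eigenbasis[OF eq equiv_sub_finite[OF eq irr] _ T_cl_2 _ V] eigen_V
    by simp
qed

section \<open>Decompositions into irreducible components\<close>

definition component_sum :: "nat \<Rightarrow> (nat \<Rightarrow> ('i \<Rightarrow> complex) set) \<Rightarrow> (nat \<Rightarrow> bool) \<Rightarrow> ('i \<Rightarrow> complex) set" where
  "component_sum r W P =
     {(\<lambda>x. \<Sum>i<r. w i x) | w. \<forall>i<r. w i \<in> W i \<and> (\<not> P i \<longrightarrow> w i = (\<lambda>_. 0))}"

lemma irred_decomp_components:
  assumes "irred_decomp S \<rho> K r W" "i < r"
  shows "csubspace (W i)" "W i \<subseteq> vecs S" "\<And>k w. k \<in> K \<Longrightarrow> w \<in> W i \<Longrightarrow> act S (\<rho> k) w \<in> W i"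
    "W i \<noteq> {\<lambda>_. 0}" "irred_sub S \<rho> K (W i)"
  using assms by (auto simp: irred_decomp_def irred_sub_def inv_subspace_def)

lemma irred_decomp_exists:
  assumes "irred_decomp S \<rho> K r W" "v \<in> vecs S"
  obtains w where "\<forall>i<r. w i \<in> W i" "v = (\<lambda>x. \<Sum>i<r. w i x)"
  using assms unfolding irred_decomp_def by blast

lemma irred_decomp_unique:
  assumes dec: "irred_decomp S \<rho> K r W" and w: "\<forall>i<r. w i \<in> W i" and w': "\<forall>i<r. w' i \<in> W i"
    and eq: "(\<lambda>x. \<Sum>i<r. w i x) = (\<lambda>x. \<Sum>i<r. w' i x)" and i: "i < r"
  shows "w i = w' i"
proof -
  define z where "z u j = (if j < r then u j else (\<lambda>_. 0))" for u :: "nat \<Rightarrow> 'a \<Rightarrow> complex" and j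
  define v where "v = (\<lambda>x. \<Sum>j<r. w j x)"
  define decomposes where
    "decomposes u \<longleftrightarrow> (\<forall>j<r. u j \<in> W j) \<and> (\<forall>j\<ge>r. u j = (\<lambda>_. 0)) \<and> v = (\<lambda>x. \<Sum>j<r. u j x)" for u
  have "v \<in> vecs S"
    unfolding v_def by (intro vecs_sum) (use w irred_decomp_components(2)[OF dec] in blast)
  then have "\<exists>!u. decomposes u"
    using dec by (simp add: irred_decomp_def decomposes_def)
  then obtain u where u: "\<And>y. decomposes y \<Longrightarrow> y = u" by blast
  have "decomposes (z w)" "decomposes (z w')"
    using w w' eq by (simp_all add: decomposes_def v_def z_def)
  then have "z w = z w'" using u by metis
  then have "z w i = z w' i" by simp
  then show ?thesis using i by (simp add: z_def)
qed

lemma inv_subspace_component_sum: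
  assumes dec: "irred_decomp S \<rho> K r W"
  shows "inv_subspace S \<rho> K (component_sum r W P)"
proof -
  note W = irred_decomp_components[OF dec]
  have "component_sum r W P \<subseteq> vecs S"
    using W(2) by (auto simp: component_sum_def intro!: vecs_sum)
  moreover have "(\<lambda>_. 0) \<in> component_sum r W P"
    unfolding component_sum_def using W(1) csubspace_zero
    by (auto intro!: exI[of _ "\<lambda>_ _. 0"])
  moreover have "(\<lambda>x. u x + v x) \<in> component_sum r W P"
    if "u \<in> component_sum r W P" "v \<in> component_sum r W P" for u v
    using that unfolding component_sum_def
    by clarsimp (rule exI[of _ "\<lambda>i x. _ i x + _ i x"], auto simp: sum.distrib intro: csubspace_add[OF W(1)])
  moreover have "(\<lambda>x. c * u x) \<in> component_sum r W P" if "u \<in> component_sum r W P" for c u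
    using that unfolding component_sum_def
    by clarsimp (rule exI[of _ "\<lambda>i x. c * _ i x"], auto simp: sum_distrib_left intro: csubspace_scale[OF W(1)])
  moreover have "act S (\<rho> k) u \<in> component_sum r W P" if "k \<in> K" "u \<in> component_sum r W P" for k u
    using that unfolding component_sum_def
    by clarsimp (rule exI[of _ "\<lambda>i. act S (\<rho> k) (_ i)"], auto simp: act_sum intro: W(3))
  ultimately show ?thesis
    unfolding inv_subspace_def csubspace_def by blast
qed

lemma component_sum_subset:
  assumes V: "csubspace V" and sub: "\<And>i. i < r \<Longrightarrow> P i \<Longrightarrow> W i \<subseteq> V"
  shows "component_sum r W P \<subseteq> V"
proof
  fix v assume "v \<in> component_sum r W P"
  then obtain w where w: "\<forall>i<r. w i \<in> W i \<and> (\<not> P i \<longrightarrow> w i = (\<lambda>_. 0))" and v: "v = (\<lambda>x. \<Sum>i<r. w i x)"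
    unfolding component_sum_def by blast
  have "w i \<in> V" if i: "i \<in> {..<r}" for i
  proof (cases "P i")
    case True
    then show ?thesis using w sub[of i] i by blast
  next
    case False
    then show ?thesis using w csubspace_zero[OF V] i by simp
  qed
  then show "v \<in> V" unfolding v by (rule csubspace_sum[OF V])
qed

text \<open>The components of an eigenvector of a generator are eigenvectors for the same eigenvalue.\<close>
lemma eigenvector_in_component_sum:
  assumes dec: "irred_decomp S \<rho> K r W" and k: "k \<in> K"
    and y: "y \<in> vecs S" "act S (\<rho> k) y = (\<lambda>x. c * y x)"
    and no_eigen: "\<And>i w. i < r \<Longrightarrow> \<not> P i \<Longrightarrow> w \<in> W i \<Longrightarrow> act S (\<rho> k) w = (\<lambda>x. c * w x) \<Longrightarrow> w = (\<lambda>_. 0)"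
  shows "y \<in> component_sum r W P"
proof -
  note W = irred_decomp_components[OF dec]
  obtain w where w: "\<forall>i<r. w i \<in> W i" and yw: "y = (\<lambda>x. \<Sum>i<r. w i x)"
    using irred_decomp_exists[OF dec y(1)] by blast
  have "(\<lambda>x. \<Sum>i<r. act S (\<rho> k) (w i) x) = (\<lambda>x. \<Sum>i<r. c * w i x)"
    using y(2) unfolding yw by (simp add: act_sum sum_distrib_left)
  moreover have "\<forall>i<r. act S (\<rho> k) (w i) \<in> W i" "\<forall>i<r. (\<lambda>x. c * w i x) \<in> W i"
    using w W(3)[OF _ k] csubspace_scale[OF W(1)] by blast+
  ultimately have eigen: "act S (\<rho> k) (w i) = (\<lambda>x. c * w i x)" if "i < r" for i
    using irred_decomp_unique[OF dec, of "\<lambda>i. act S (\<rho> k) (w i)" "\<lambda>i x. c * w i x" i] that by simp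
  have "\<forall>i<r. w i \<in> W i \<and> (\<not> P i \<longrightarrow> w i = (\<lambda>_. 0))"
    using w eigen no_eigen by blast
  then show ?thesis
    unfolding component_sum_def yw by blast
qed

lemma component_sum_single:
  fixes r :: nat
  assumes "\<forall>m<r. csubspace (W m)" "l < r" "u \<in> W l"
  shows "u = (\<lambda>x. \<Sum>m<r. (if m = l then u else (\<lambda>_. 0)) x)"
    and "\<forall>m<r. (if m = l then u else (\<lambda>_. 0)) \<in> W m"
proof -
  show "u = (\<lambda>x. \<Sum>m<r. (if m = l then u else (\<lambda>_. 0)) x)"
    using assms(2) by (simp add: if_distrib[of "\<lambda>f. f _"] cong: if_cong)
  show "\<forall>m<r. (if m = l then u else (\<lambda>_. 0)) \<in> W m"
    using assms(1,3) by (auto intro: csubspace_zero)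
qed

lemma component_in_component_sum:
  assumes dec: "irred_decomp S \<rho> K r W" and l: "l < r" "P l" and u: "u \<in> W l"
  shows "u \<in> component_sum r W P"
proof -
  have "\<forall>m<r. csubspace (W m)" using irred_decomp_components(1)[OF dec] by blast
  note u_single = component_sum_single[OF this l(1) u]
  show ?thesis
    unfolding component_sum_def
  proof (intro CollectI exI conjI allI impI)
    show "u = (\<lambda>x. \<Sum>m<r. (if m = l then u else (\<lambda>_. 0)) x)" by (rule u_single(1))
    fix m assume "m < r"
    then show "(if m = l then u else (\<lambda>_. 0)) \<in> W m" using u_single(2) by blast
    assume "\<not> P m"
    then show "(if m = l then u else (\<lambda>_. 0)) = (\<lambda>_. 0)" using l(2) by auto
  qed
qed

lemma component_sum_inter_component:
  assumes dec: "irred_decomp S \<rho> K r W" and j: "j < r" "\<not> P j"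
    and v: "v \<in> W j" "v \<in> component_sum r W P"
  shows "v = (\<lambda>_. 0)"
proof -
  obtain w where w: "\<forall>m<r. w m \<in> W m \<and> (\<not> P m \<longrightarrow> w m = (\<lambda>_. 0))" and vw: "v = (\<lambda>x. \<Sum>m<r. w m x)"
    using v(2) unfolding component_sum_def by blast
  have "\<forall>m<r. csubspace (W m)" using irred_decomp_components(1)[OF dec] by blast
  note v_single = component_sum_single[OF this j(1) v(1)]
  have "\<forall>m<r. w m \<in> W m" using w by blast
  moreover have "(\<lambda>x. \<Sum>m<r. w m x) = (\<lambda>x. \<Sum>m<r. (if m = j then v else (\<lambda>_. 0)) x)"
    by (simp only: vw[symmetric] v_single(1)[symmetric])
  ultimately have "w j = (if j = j then v else (\<lambda>_. 0))"
    by (rule irred_decomp_unique[OF dec _ v_single(2) _ j(1)])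
  then show ?thesis using w j by simp
qed

lemma component_sum_trivial:
  assumes dec: "irred_decomp S \<rho> K r W" and irr: "irred_sub S \<rho> K' (vecs S)"
    and inv: "inv_subspace S \<rho> K' (component_sum r W P)"
  shows "(\<forall>i<r. P i) \<or> (\<forall>i<r. \<not> P i)"
proof (rule ccontr)
  note W = irred_decomp_components[OF dec]
  assume "\<not> ?thesis"
  then obtain i j where i: "i < r" "P i" and j: "j < r" "\<not> P j" by blast
  obtain u where u: "u \<in> W i" "u \<noteq> (\<lambda>_. 0)"
    using W(4)[OF i(1)] csubspace_zero[OF W(1)[OF i(1)]] by blast
  then have "component_sum r W P \<noteq> {\<lambda>_. 0}"
    using component_in_component_sum[of S \<rho> K r W i P u, OF dec i] by blast
  moreover have "component_sum r W P \<subseteq> vecs S" using inv by (simp add: inv_subspace_def)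
  moreover have "\<forall>U. inv_subspace S \<rho> K' U \<and> U \<subseteq> vecs S \<longrightarrow> U = {\<lambda>_. 0} \<or> U = vecs S"
    using irr by (simp add: irred_sub_def)
  ultimately have all: "component_sum r W P = vecs S"
    using inv by blast
  obtain v where v: "v \<in> W j" "v \<noteq> (\<lambda>_. 0)"
    using W(4)[OF j(1)] csubspace_zero[OF W(1)[OF j(1)]] by blast
  moreover have "v \<in> component_sum r W P" using v(1) all W(2)[OF j(1)] by auto
  ultimately show False using component_sum_inter_component[of S \<rho> K r W j P v, OF dec j] by blast
qed

lemma classical_part_closed_under_commutant:
  fixes h :: complex
  assumes h0: "h \<noteq> 0" and nr: "\<forall>k::nat. k > 0 \<longrightarrow> (h^2)^k \<noteq> 1" and N: "2 \<le> N"
    and dec: "irred_decomp S \<rho> {2..N} r W"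
    and types: "\<And>i. i < r \<Longrightarrow> classical_type h N S \<rho> (W i) \<or> nonclassical_type h N S \<rho> (W i)"
    and comm: "\<And>y. y \<in> vecs S \<Longrightarrow> act S (\<rho> 2) (act S B y) = act S B (act S (\<rho> 2) y)"
  shows "component_sum r W (\<lambda>i. classical_type h N S \<rho> (W i))
    \<subseteq> {v \<in> vecs S. act S B v \<in> component_sum r W (\<lambda>i. classical_type h N S \<rho> (W i))}"
    (is "?V \<subseteq> ?pre")
proof -
  note W_irr = irred_decomp_components(5)[OF dec]
  have eigen_V: "y \<in> ?V" if "y \<in> vecs S" "act S (\<rho> 2) y = (\<lambda>x. \<i> * qn h a * y x)" for y a
  proof (rule eigenvector_in_component_sum[OF dec _ that])
    show "2 \<in> {2..N}" using N by simp
    fix i w assume "i < r" "\<not> classical_type h N S \<rho> (W i)" "w \<in> W i"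
      "act S (\<rho> 2) w = (\<lambda>x. \<i> * qn h a * w x)"
    then show "w = (\<lambda>_. 0)"
      using nonclassical_type_no_imag_qn_eigenvector[OF h0 nr N _ W_irr] types by blast
  qed
  have "csubspace ?pre"
    using inv_subspace_component_sum[OF dec] by (simp add: csubspace_act_preimage inv_subspace_def)
  moreover have "W i \<subseteq> ?pre" if "i < r" "classical_type h N S \<rho> (W i)" for i
  proof (rule classical_type_imag_qn_eigenbasis[OF N that(2) W_irr[OF that(1)] \<open>csubspace ?pre\<close>])
    fix a y assume "y \<in> vecs S" "act S (\<rho> 2) y = (\<lambda>x. \<i> * qn h a * y x)"
    then show "y \<in> ?pre"
      using eigen_V[of "act S B y" a] comm by (simp add: act_scale)
  qed
  ultimately show ?thesis by (rule component_sum_subset)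
qed

theorem proposition3:
  fixes h :: complex and n :: nat and S :: "nat set" and \<rho> :: "nat \<Rightarrow> nat \<Rightarrow> nat \<Rightarrow> complex"
  assumes "h \<noteq> 0"
    and "\<forall>k::nat. k > 0 \<longrightarrow> (h^2)^k \<noteq> 1"
    and "n \<ge> 4"
    and "hypA h (n - 1)"
    and "is_rep h n S \<rho>"
    and "irred_sub S \<rho> {2..n} (vecs S)"
  shows "\<exists>r W. irred_decomp S \<rho> {2..n-1} r W \<and>
           ((\<forall>i<r. classical_type h (n-1) S \<rho> (W i)) \<or>
            (\<forall>i<r. nonclassical_type h (n-1) S \<rho> (W i)))"
proof -
  note h0 = assms(1) and nr = assms(2) and n4 = assms(3) and hA = assms(4) and rep = assms(5)
  have repN: "is_rep h (n - 1) S \<rho>" using is_rep_restrict[OF rep] .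
  obtain r W where dec: "irred_decomp S \<rho> {2..n-1} r W"
    using hA repN unfolding hypA_def completely_reducible_def by blast
  define cl where "cl i \<longleftrightarrow> classical_type h (n-1) S \<rho> (W i)" for i
  have types: "cl i \<or> nonclassical_type h (n-1) S \<rho> (W i)" if "i < r" for i
    unfolding cl_def by (rule hypA_irred_sub_type[OF repN hA irred_decomp_components(5)[OF dec that]])
  have "component_sum r W cl \<subseteq> {v \<in> vecs S. act S (\<rho> n) v \<in> component_sum r W cl}"
    unfolding cl_def
  proof (rule classical_part_closed_under_commutant[OF h0 nr _ dec types[unfolded cl_def]])
    show "2 \<le> n - 1" using n4 by simp
    show "act S (\<rho> 2) (act S (\<rho> n) y) = act S (\<rho> n) (act S (\<rho> 2) y)" if "y \<in> vecs S" for y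
      using is_rep_commute[OF rep _ _ _ that] n4 by simp
  qed
  moreover have "{2..n} = insert n {2..n-1}" using n4 by auto
  ultimately have "inv_subspace S \<rho> {2..n} (component_sum r W cl)"
    using inv_subspace_component_sum[OF dec] unfolding inv_subspace_def by auto
  then have "(\<forall>i<r. cl i) \<or> (\<forall>i<r. \<not> cl i)"
    by (rule component_sum_trivial[OF dec assms(6)])
  then show ?thesis
    using dec types unfolding cl_def by blast
qed

end
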